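(* For every even integer $q\ge2$ and all $t_1,t_2\in\mathbf{R}$, $$\sum_{m,n=0}^{q-1}e^{-\frac{4\pi imn}{q}}\,\vartheta_{\frac nq,\frac m2}\big(t_1,\tfrac{iq}2\big)\,\vartheta_{\frac nq,\frac m2}\big(-t_1,\tfrac{iq}2\big)\,\vartheta_{\frac mq,\frac n2}\big(t_2,\tfrac{iq}2\big)\,\vartheta_{\frac mq,\frac n2}\big(-t_2,\tfrac{iq}2\big)=q\,\vartheta\big(t_1,\tfrac{iq}2\big)^2\,\vartheta\big(t_2,\tfrac{iq}2\big)^2.$$
   Context: $\vartheta_{a,b}(z,\tau)=\sum_{m\in\mathbf{Z}}e^{\pi i(m+a)^2\tau+2\pi i(m+a)(z+b)}$ and $\vartheta=\vartheta_{0,0}$, for $z\in\mathbf{C}$, $\operatorname{Im}\tau>0$, $a,b\in\mathbf{R}$. *)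

theory Defs
  imports "HOL-Analysis.Analysis"
begin

text \<open>The series converges absolutely for Im tau > 0, so the unordered sum over Z is used.\<close>
definition theta_char :: "real \<Rightarrow> real \<Rightarrow> complex \<Rightarrow> complex \<Rightarrow> complex" where
  "theta_char a b z \<tau> =
     (\<Sum>\<^sub>\<infinity>m::int. exp (pi * \<i> * (of_int m + of_real a)^2 * \<tau>
                      + 2 * pi * \<i> * (of_int m + of_real a) * (z + of_real b)))"

definition theta :: "complex \<Rightarrow> complex \<Rightarrow> complex" where
  "theta z \<tau> = theta_char 0 0 z \<tau>"

end

(*
  Write tau = i q / 2 and p = q / 2.  Poisson summation for the Gaussian, obtained by comparing
  the Fourier coefficients of two continuous periodic functions (which determine such a function
  by Stone-Weierstrass on the circle), rewrites theta(t, tau)^2, with its terms grouped by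
  k + l = u, as
    sqrt q * theta(t, tau)^2 = sum over (u, w) in Z^2 of
                                 exp (2 pi i t u - pi q u^2 / 4 - pi w^2 / q + pi i u w).
  After expanding the four theta functions on the left, the substitution
    (m, n, k, l, k', l')  |->  ((k - l, p (k' + l') + m), (k' - l', p (k + l) + n))
  is a bijection from {0..q-1}^2 x Z^4 onto Z^2 x Z^2 (division with remainder by q recovers
  n, l and m, l') which turns every summand into the product of the dual terms for t1 and t2,
  since the exponents differ by an integer multiple of 2 pi i.  Hence the left-hand side is
  (sqrt q * theta(t1, tau)^2) * (sqrt q * theta(t2, tau)^2).
*)

theory Submission
  imports Defs "HOL-Probability.Probability"
begin

section \<open>Uniqueness of Fourier coefficients\<close>

definition fourier_char :: "int \<Rightarrow> real \<Rightarrow> complex" where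
  "fourier_char k x = exp (2 * pi * \<i> * of_int k * of_real x)"

lemma fourier_char_shift_int: "fourier_char k (x + of_int j) = fourier_char k x"
proof -
  have "2 * pi * \<i> * of_int k * of_real (x + of_int j)
      = 2 * pi * \<i> * of_int k * of_real x + \<i> * (of_int (k * j) * (of_real pi * 2))"
    by (simp add: algebra_simps)
  then show ?thesis
    unfolding fourier_char_def by (simp only: exp_plus_2pin)
qed

lemma fourier_char_mult: "fourier_char k x * fourier_char j x = fourier_char (k + j) x"
  unfolding fourier_char_def by (simp add: exp_add[symmetric] algebra_simps)

lemma cnj_fourier_char: "cnj (fourier_char k x) = fourier_char (- k) x"
  unfolding fourier_char_def by (simp add: exp_cnj)

lemma norm_fourier_char [simp]: "norm (fourier_char k x) = 1"
  unfolding fourier_char_def by (simp add: norm_exp_eq_Re)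

lemma isCont_fourier_char [continuous_intros]: "isCont (fourier_char k) x"
  unfolding fourier_char_def by (intro continuous_intros)

lemma continuous_on_fourier_char [continuous_intros]: "continuous_on S (fourier_char k)"
  unfolding fourier_char_def by (intro continuous_intros)

lemma integral_fourier_char: "integral {0..1} (fourier_char k) = (if k = 0 then 1 else 0)"
proof (cases "k = 0")
  case True
  have "fourier_char 0 = (\<lambda>x. 1)"
    by (simp add: fun_eq_iff fourier_char_def)
  with True show ?thesis
    by simp
next
  case False
  define c :: complex where "c = 2 * pi * \<i> * of_int k"
  have c: "c \<noteq> 0"
    using False by (simp add: c_def)
  have "((\<lambda>x. exp (c * of_real x) / c) has_vector_derivative fourier_char k x) (at x within {0..1})" for x
  proof -
    have "((\<lambda>z. exp (c * z) / c) has_field_derivative exp (c * of_real x)) (at (of_real x))"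
      by (auto intro!: derivative_eq_intros simp: c)
    from has_vector_derivative_real_field[OF this] show ?thesis
      by (simp add: fourier_char_def c_def)
  qed
  then have "(fourier_char k has_integral (exp (c * of_real 1) / c - exp (c * of_real 0) / c)) {0..1}"
    by (intro fundamental_theorem_of_calculus) auto
  moreover have "exp (c * of_real 1) = 1"
    using fourier_char_shift_int[of k 0 1] by (simp add: fourier_char_def c_def)
  ultimately show ?thesis
    using False by (simp add: integral_unique)
qed

inductive trig_polynomial :: "(real \<Rightarrow> complex) \<Rightarrow> bool" where
  trig_polynomial_char: "trig_polynomial (\<lambda>x. c * fourier_char k x)"
| trig_polynomial_add: "trig_polynomial f \<Longrightarrow> trig_polynomial g \<Longrightarrow> trig_polynomial (\<lambda>x. f x + g x)"

lemma trig_polynomial_mult: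
  assumes "trig_polynomial f" "trig_polynomial g"
  shows "trig_polynomial (\<lambda>x. f x * g x)"
  using assms
proof (induction f rule: trig_polynomial.induct)
  case (trig_polynomial_char c k)
  from \<open>trig_polynomial g\<close> show ?case
  proof (induction g rule: trig_polynomial.induct)
    case (trig_polynomial_char d j)
    have "(\<lambda>x. c * fourier_char k x * (d * fourier_char j x)) = (\<lambda>x. (c * d) * fourier_char (k + j) x)"
      by (simp add: fun_eq_iff fourier_char_mult[symmetric] mult_ac)
    then show ?case
      by (simp add: trig_polynomial.trig_polynomial_char)
  next
    case (trig_polynomial_add g1 g2)
    then show ?case
      by (simp add: distrib_left trig_polynomial.trig_polynomial_add)
  qed
next
  case (trig_polynomial_add f1 f2)
  then show ?case
    by (simp add: distrib_right trig_polynomial.trig_polynomial_add)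
qed

lemma trig_polynomial_real_polynomial_function:
  assumes "real_polynomial_function g"
  shows "trig_polynomial (\<lambda>x. complex_of_real (g (fourier_char 1 x)))"
  using assms
proof (induction g rule: real_polynomial_function.induct)
  case (linear g)
  define a where "a = complex_of_real (g 1)"
  define b where "b = complex_of_real (g \<i>)"
  have g_eq: "complex_of_real (g z) = complex_of_real (Re z) * a + complex_of_real (Im z) * b" for z
  proof -
    interpret bounded_linear g
      by (fact linear)
    have "z = Re z *\<^sub>R 1 + Im z *\<^sub>R \<i>"
      by (simp add: complex_eq_iff)
    then have "g z = g (Re z *\<^sub>R 1 + Im z *\<^sub>R \<i>)"
      by simp
    then show ?thesis
      by (simp add: add scaleR a_def b_def)
  qed
  have Re_eq: "complex_of_real (Re z) = (z + cnj z) / 2" for z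
    by (simp add: complex_add_cnj)
  have Im_eq: "complex_of_real (Im z) = (z - cnj z) / (2 * \<i>)" for z
    by (simp add: complex_eq_iff)
  have g_fourier_char: "complex_of_real (g (fourier_char 1 x))
      = (a / 2 + b / (2 * \<i>)) * fourier_char 1 x + (a / 2 - b / (2 * \<i>)) * fourier_char (- 1) x" for x
    unfolding g_eq Re_eq Im_eq cnj_fourier_char by (simp add: field_simps)
  show ?case
    unfolding g_fourier_char by (intro trig_polynomial_add trig_polynomial_char)
next
  case (const c)
  have "trig_polynomial (\<lambda>x. complex_of_real c * fourier_char 0 x)"
    by (rule trig_polynomial_char)
  then show ?case
    by (simp add: fourier_char_def)
next
  case (add f g)
  then show ?case
    by (simp add: trig_polynomial_add)
next
  case (mult f g)
  then show ?case
    by (simp add: trig_polynomial_mult)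
qed

lemma continuous_on_trig_polynomial:
  "trig_polynomial p \<Longrightarrow> continuous_on S p"
  by (induction p rule: trig_polynomial.induct) (auto intro!: continuous_intros)

lemma integral_mult_trig_polynomial_eq_0:
  fixes d :: "real \<Rightarrow> complex"
  assumes cont: "continuous_on {0..1} d"
    and coef: "\<And>k. integral {0..1} (\<lambda>x. d x * fourier_char k x) = 0"
    and "trig_polynomial p"
  shows "integral {0..1} (\<lambda>x. d x * p x) = 0"
  using \<open>trig_polynomial p\<close>
proof (induction p rule: trig_polynomial.induct)
  case (trig_polynomial_char c k)
  have "integral {0..1} (\<lambda>x. d x * (c * fourier_char k x))
      = c * integral {0..1} (\<lambda>x. d x * fourier_char k x)"
    by (simp add: mult.left_commute)
  then show ?case
    using coef by simp
next
  case (trig_polynomial_add f g)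
  have "(\<lambda>x. d x * h x) integrable_on {0..1}" if "trig_polynomial h" for h
    using that by (intro integrable_continuous_real continuous_intros cont continuous_on_trig_polynomial)
  then show ?case
    using trig_polynomial_add by (simp add: distrib_left integral_add)
qed

lemma periodic_shift_int:
  fixes f :: "real \<Rightarrow> 'a"
  assumes per: "\<And>x. f (x + 1) = f x"
  shows "f (x + of_int n) = f x"
proof (induction n rule: int_induct[where k = 0])
  case (step1 i)
  then show ?case
    using per[of "x + of_int i"] by (simp add: add_ac)
next
  case (step2 i)
  then show ?case
    using per[of "x + of_int (i - 1)"] by (simp add: add_ac)
qed simp

lemma periodic_Im_Ln_uminus:
  fixes d :: "real \<Rightarrow> 'a"
  assumes per: "\<And>x. d (x + 1) = d x" and "z \<noteq> 0"
  shows "d (Im (Ln (- z)) / (2 * pi) + 1 / 2) = d (Im (Ln z) / (2 * pi))"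
proof -
  have "exp (Ln (- z)) = exp (Ln z + \<i> * pi)"
    using \<open>z \<noteq> 0\<close> by (simp add: exp_add)
  then obtain n :: int where "Ln (- z) = Ln z + \<i> * pi + of_int (2 * n) * pi * \<i>"
    unfolding exp_eq by blast
  then have "Im (Ln (- z)) = Im (Ln z) + pi + 2 * n * pi"
    by simp
  then have "Im (Ln (- z)) / (2 * pi) + 1 / 2 = Im (Ln z) / (2 * pi) + of_int (n + 1)"
    by (simp add: field_simps)
  then show ?thesis
    using periodic_shift_int[where f = d, OF per, of "Im (Ln z) / (2 * pi)" "n + 1"] by simp
qed

lemma continuous_on_sphere_periodic_Ln:
  fixes d :: "real \<Rightarrow> 'a::topological_space"
  assumes cont: "continuous_on UNIV d" and per: "\<And>x. d (x + 1) = d x"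
  shows "continuous_on (sphere 0 1) (\<lambda>z. d (Im (Ln z) / (2 * pi)))"
proof -
  define D where "D z = d (Im (Ln z) / (2 * pi))" for z
  have d_cont: "isCont d y" for y
    using cont by (simp add: continuous_on_eq_continuous_at)
  \<comment> \<open>Off the branch cut of \<open>Ln\<close> this is clear; on it, \<open>D\<close> agrees near \<open>z\<close> with a
      function built from \<open>Ln (- z)\<close>, by periodicity.\<close>
  have D_neg: "D z = d (Im (Ln (- z)) / (2 * pi) + 1 / 2)" if "z \<noteq> 0" for z
    unfolding D_def using periodic_Im_Ln_uminus[where d = d, OF per that] by simp
  show ?thesis
    unfolding D_def[symmetric]
  proof (intro continuous_at_imp_continuous_on ballI)
    fix z :: complex
    assume "z \<in> sphere 0 1"
    then have z: "z \<noteq> 0"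
      by auto
    show "isCont D z"
    proof (cases "z \<in> \<real>\<^sub>\<le>\<^sub>0")
      case False
      have "isCont (\<lambda>z. Im (Ln z) / (2 * pi)) z"
        by (rule isCont_o2[OF continuous_at_Ln[OF False]]) (auto intro!: continuous_intros)
      from isCont_o2[OF this d_cont] show ?thesis
        unfolding D_def .
    next
      case True
      then have "- z \<notin> \<real>\<^sub>\<le>\<^sub>0"
        using z by (auto simp: nonpos_Reals_def)
      then have "isCont Ln (- z)"
        by (rule continuous_at_Ln)
      then have "isCont (\<lambda>z. Ln (- z)) z"
        by (rule isCont_o2[rotated]) (intro continuous_intros)
      then have "isCont (\<lambda>z. Im (Ln (- z)) / (2 * pi) + 1 / 2) z"
        by (auto intro!: continuous_intros)
      from isCont_o2[OF this d_cont]
      have "isCont (\<lambda>z. d (Im (Ln (- z)) / (2 * pi) + 1 / 2)) z" .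
      moreover have "eventually (\<lambda>w. w \<noteq> 0) (nhds z)"
        using eventually_nhds_in_open[of "- {0}" z] z by (simp add: open_Compl)
      then have "eventually (\<lambda>w. D w = d (Im (Ln (- w)) / (2 * pi) + 1 / 2)) (nhds z)"
        by (rule eventually_mono) (rule D_neg)
      ultimately show ?thesis
        using isCont_cong[of D "\<lambda>w. d (Im (Ln (- w)) / (2 * pi) + 1 / 2)" z] by simp
    qed
  qed
qed

lemma periodic_factors_through_circle:
  fixes d :: "real \<Rightarrow> 'a::topological_space"
  assumes cont: "continuous_on UNIV d" and per: "\<And>x. d (x + 1) = d x"
  obtains D where "continuous_on (sphere 0 1) D" and "\<And>x. D (fourier_char 1 x) = d x"
proof
  define D where "D z = d (Im (Ln z) / (2 * pi))" for z
  show "continuous_on (sphere 0 1) D"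
    unfolding D_def[abs_def] by (rule continuous_on_sphere_periodic_Ln[OF cont per])
  show "D (fourier_char 1 x) = d x" for x
  proof -
    obtain n :: int where "Ln (fourier_char 1 x) = 2 * pi * \<i> * x + of_int (2 * n) * pi * \<i>"
      using exp_Ln[of "fourier_char 1 x"] unfolding exp_eq fourier_char_def by auto
    then have "Im (Ln (fourier_char 1 x)) / (2 * pi) = x + of_int n"
      by (simp add: field_simps)
    then show ?thesis
      unfolding D_def by (simp add: periodic_shift_int per)
  qed
qed

lemma integral_square_le_if_fourier_coefficients_eq_0:
  fixes d :: "real \<Rightarrow> real"
  assumes cont: "continuous_on UNIV d" and per: "\<And>x. d (x + 1) = d x"
    and coef: "\<And>k. integral {0..1} (\<lambda>x. complex_of_real (d x) * fourier_char k x) = 0"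
    and "e > 0"
  shows "integral {0..1} (\<lambda>x. d x * d x) \<le> e * integral {0..1} (\<lambda>x. \<bar>d x\<bar>)"
proof -
  obtain D where D_cont: "continuous_on (sphere 0 1) D" and D: "\<And>x. D (fourier_char 1 x) = d x"
    using periodic_factors_through_circle[OF cont per] by blast
  have d_cont: "continuous_on {0..1} d"
    using cont by (rule continuous_on_subset) auto
  have int_dd: "(\<lambda>x. d x * d x) integrable_on {0..1}"
    by (intro integrable_continuous_real continuous_intros d_cont)
  \<comment> \<open>\<open>d\<close> is orthogonal to every trigonometric polynomial, and these are uniformly dense
      by Stone--Weierstrass on the circle.\<close>
  obtain g where g: "real_polynomial_function g" and g_approx: "\<And>z. z \<in> sphere 0 1 \<Longrightarrow> \<bar>D z - g z\<bar> < e"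
    using Stone_Weierstrass_real_polynomial_function[OF compact_sphere D_cont \<open>e > 0\<close>] by blast
  define p where "p x = g (fourier_char 1 x)" for x
  have p_cont: "continuous_on {0..1} p"
    unfolding p_def
    by (intro continuous_at_imp_continuous_on ballI isCont_o2[OF _ continuous_real_polymonial_function[OF g]]
        continuous_intros)
  have int_dp: "(\<lambda>x. d x * p x) integrable_on {0..1}"
    and int_dp': "(\<lambda>x. d x * (d x - p x)) integrable_on {0..1}"
    by (intro integrable_continuous_real continuous_intros d_cont p_cont)+
  have "complex_of_real (integral {0..1} (\<lambda>x. d x * p x))
      = integral {0..1} (complex_of_real \<circ> (\<lambda>x. d x * p x))"
    by (rule integral_linear[OF int_dp bounded_linear_of_real, symmetric])
  also have "\<dots> = integral {0..1} (\<lambda>x. complex_of_real (d x) * complex_of_real (p x))"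
    by (simp add: o_def)
  also have "\<dots> = 0"
    unfolding p_def
  proof (rule integral_mult_trig_polynomial_eq_0[OF _ coef trig_polynomial_real_polynomial_function[OF g]])
    show "continuous_on {0..1} (\<lambda>x. complex_of_real (d x))"
      by (intro continuous_on_of_real d_cont)
  qed
  finally have "integral {0..1} (\<lambda>x. d x * p x) = 0"
    by simp
  then have "integral {0..1} (\<lambda>x. d x * d x) = integral {0..1} (\<lambda>x. d x * (d x - p x))"
    using integral_diff[OF int_dd int_dp] by (simp add: right_diff_distrib)
  also have "\<dots> \<le> integral {0..1} (\<lambda>x. e * \<bar>d x\<bar>)"
  proof (rule integral_le[OF int_dp'])
    show "(\<lambda>x. e * \<bar>d x\<bar>) integrable_on {0..1}"
      by (intro integrable_continuous_real continuous_intros d_cont)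
    fix y :: real
    have "\<bar>d y - p y\<bar> \<le> e"
      using g_approx[of "fourier_char 1 y"] by (simp add: D p_def)
    then have "\<bar>d y\<bar> * \<bar>d y - p y\<bar> \<le> \<bar>d y\<bar> * e"
      by (intro mult_left_mono) auto
    moreover have "d y * (d y - p y) \<le> \<bar>d y\<bar> * \<bar>d y - p y\<bar>"
      by (metis abs_ge_self abs_mult)
    ultimately show "d y * (d y - p y) \<le> e * \<bar>d y\<bar>"
      by (simp add: mult.commute)
  qed
  also have "\<dots> = e * integral {0..1} (\<lambda>x. \<bar>d x\<bar>)"
    by simp
  finally show ?thesis .
qed

lemma fourier_coefficients_eq_0_imp_eq_0:
  fixes d :: "real \<Rightarrow> real"
  assumes cont: "continuous_on UNIV d" and per: "\<And>x. d (x + 1) = d x"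
    and coef: "\<And>k. integral {0..1} (\<lambda>x. complex_of_real (d x) * fourier_char k x) = 0"
  shows "d x = 0"
proof -
  have d_cont: "continuous_on {0..1} d"
    using cont by (rule continuous_on_subset) auto
  have int_dd: "(\<lambda>x. d x * d x) integrable_on {0..1}"
    and int_abs: "(\<lambda>x. \<bar>d x\<bar>) integrable_on {0..1}"
    by (intro integrable_continuous_real continuous_intros d_cont)+
  define C where "C = integral {0..1} (\<lambda>x. \<bar>d x\<bar>)"
  have approx: "integral {0..1} (\<lambda>x. d x * d x) \<le> e * C" if "e > 0" for e
    unfolding C_def by (rule integral_square_le_if_fourier_coefficients_eq_0[OF cont per coef that])
  have "C \<ge> 0"
    unfolding C_def by (intro integral_nonneg int_abs) auto
  have "integral {0..1} (\<lambda>x. d x * d x) \<le> 0"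
  proof (rule ccontr)
    assume "\<not> ?thesis"
    then have pos: "integral {0..1} (\<lambda>x. d x * d x) > 0"
      by simp
    with \<open>C \<ge> 0\<close> have "integral {0..1} (\<lambda>x. d x * d x) \<le> integral {0..1} (\<lambda>x. d x * d x) / (C + 1) * C"
      by (intro approx) auto
    with pos \<open>C \<ge> 0\<close> show False
      by (simp add: field_simps)
  qed
  moreover have "integral {0..1} (\<lambda>x. d x * d x) \<ge> 0"
    by (intro integral_nonneg int_dd) auto
  ultimately have "((\<lambda>x. d x * d x) has_integral 0) (cbox 0 1)"
    using int_dd by (simp add: has_integral_iff)
  then have "d y * d y = 0" if "y \<in> {0..1}" for y
    by (rule has_integral_0_cbox_imp_0[rotated 2]) (use that d_cont in \<open>auto intro!: continuous_intros\<close>)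
  then have "d (frac x) = 0"
    by (simp add: frac_lt_1 less_imp_le)
  moreover have "d x = d (frac x)"
    using periodic_shift_int[of d "frac x" "\<lfloor>x\<rfloor>", OF per] by (simp add: frac_def)
  ultimately show ?thesis
    by simp
qed

section \<open>Series indexed by the integers\<close>

lemma sum_int_interval_symmetric:
  "(\<Sum>i<n. f (int i) + f (- int i - 1)) = sum f {- int n..<int n}"
proof (induction n)
  case (Suc n)
  have "{- int (Suc n)..<int (Suc n)} = insert (- int n - 1) (insert (int n) {- int n..<int n})"
    by auto
  then show ?case
    using Suc by (simp add: add_ac)
qed simp

lemma range_int_Un_range_negative: "range int \<union> range (\<lambda>n. - int n - 1) = UNIV"
proof -
  have "k \<in> range int \<union> range (\<lambda>n. - int n - 1)" for k :: int
  proof (cases "k \<ge> 0")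
    case True
    then show ?thesis
      by (auto intro!: image_eqI[of _ _ "nat k"])
  next
    case False
    then show ?thesis
      by (auto intro!: image_eqI[of _ _ "nat (- k - 1)"])
  qed
  then show ?thesis
    by auto
qed

lemma sums_symmetric_if_summable_on_int:
  fixes f :: "int \<Rightarrow> 'a::banach"
  assumes "f summable_on UNIV"
  shows "(\<lambda>n. f (int n) + f (- int n - 1)) sums (\<Sum>\<^sub>\<infinity>k. f k)"
proof -
  have inj: "inj int" "inj (\<lambda>n::nat. - int n - 1)"
    by (auto simp: inj_def)
  have summ: "f summable_on range int" "f summable_on range (\<lambda>n. - int n - 1)"
    by (auto intro: summable_on_subset_banach[OF assms])
  have "(\<lambda>n. f (int n)) sums infsum f (range int)"
    using has_sum_infsum[OF summ(1)] has_sum_reindex[OF inj(1)]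
    by (auto simp: o_def intro!: has_sum_imp_sums)
  moreover have "(\<lambda>n. f (- int n - 1)) sums infsum f (range (\<lambda>n. - int n - 1))"
    using has_sum_infsum[OF summ(2)] has_sum_reindex[OF inj(2)]
    by (auto simp: o_def intro!: has_sum_imp_sums)
  moreover have "infsum f UNIV = infsum f (range int) + infsum f (range (\<lambda>n. - int n - 1))"
    using infsum_Un_disjoint[OF summ] range_int_Un_range_negative by fastforce
  ultimately show ?thesis
    by (simp add: sums_add)
qed

lemma summable_on_int_if_summable_halves:
  fixes f :: "int \<Rightarrow> real"
  assumes nonneg: "\<And>k. f k \<ge> 0"
    and "summable (\<lambda>n. f (int n))" and "summable (\<lambda>n. f (- int n - 1))"
  shows "f summable_on UNIV"
proof -
  have inj: "inj int" "inj (\<lambda>n::nat. - int n - 1)"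
    by (auto simp: inj_def)
  have "f summable_on range int" "f summable_on range (\<lambda>n. - int n - 1)"
    using assms summable_on_UNIV_nonneg_real_iff[of "f \<circ> int"]
      summable_on_UNIV_nonneg_real_iff[of "f \<circ> (\<lambda>n. - int n - 1)"]
    by (auto simp: summable_on_reindex inj o_def)
  from summable_on_Un_disjoint[OF this] show ?thesis
    using range_int_Un_range_negative by fastforce
qed

lemma uniform_limit_int_series:
  fixes f :: "int \<Rightarrow> 'a \<Rightarrow> 'b::banach"
  assumes bound: "\<And>k x. x \<in> S \<Longrightarrow> norm (f k x) \<le> M k" and M: "M summable_on UNIV"
  shows "uniform_limit S (\<lambda>n x. \<Sum>k\<in>{- int n..<int n}. f k x) (\<lambda>x. \<Sum>\<^sub>\<infinity>k. f k x) sequentially"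
proof -
  have ul: "uniform_limit S (\<lambda>n x. \<Sum>i<n. f (int i) x + f (- int i - 1) x)
      (\<lambda>x. \<Sum>i. f (int i) x + f (- int i - 1) x) sequentially"
  proof (rule Weierstrass_m_test)
    show "summable (\<lambda>i. M (int i) + M (- int i - 1))"
      using sums_symmetric_if_summable_on_int[OF M] by (rule sums_summable)
    show "norm (f (int i) x + f (- int i - 1) x) \<le> M (int i) + M (- int i - 1)" if "x \<in> S" for i x
      by (intro norm_triangle_le add_mono bound that)
  qed
  have lim: "(\<Sum>i. f (int i) x + f (- int i - 1) x) = (\<Sum>\<^sub>\<infinity>k. f k x)" if "x \<in> S" for x
  proof -
    have "(\<lambda>k. norm (f k x)) summable_on UNIV"
      by (rule summable_on_comparison_test[OF M]) (use bound[OF that] in auto)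
    then have "(\<lambda>k. f k x) summable_on UNIV"
      by (rule abs_summable_summable)
    from sums_symmetric_if_summable_on_int[OF this] show ?thesis
      by (rule sums_unique[symmetric])
  qed
  have partial: "(\<Sum>i<n. f (int i) x + f (- int i - 1) x) = (\<Sum>k\<in>{- int n..<int n}. f k x)" for n x
    using sum_int_interval_symmetric[of "\<lambda>k. f k x" n] by simp
  show ?thesis
    by (rule uniform_limit_cong'[THEN iffD1, OF partial lim ul])
qed

lemma continuous_on_int_series:
  fixes f :: "int \<Rightarrow> 'a::topological_space \<Rightarrow> 'b::banach"
  assumes "\<And>k. continuous_on S (f k)"
    and "\<And>k x. x \<in> S \<Longrightarrow> norm (f k x) \<le> M k" and "M summable_on UNIV"
  shows "continuous_on S (\<lambda>x. \<Sum>\<^sub>\<infinity>k. f k x)"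
  by (rule uniform_limit_theorem[OF _ uniform_limit_int_series[OF assms(2,3)]])
     (auto intro!: always_eventually continuous_on_sum assms(1))

lemma tendsto_sum_integral_int_series:
  fixes f :: "int \<Rightarrow> real \<Rightarrow> 'b::banach"
  assumes "\<And>k. continuous_on {a..b} (f k)"
    and "\<And>k x. x \<in> {a..b} \<Longrightarrow> norm (f k x) \<le> M k" and "M summable_on UNIV"
  shows "(\<lambda>n. \<Sum>k\<in>{- int n..<int n}. integral {a..b} (f k)) \<longlonglongrightarrow> integral {a..b} (\<lambda>x. \<Sum>\<^sub>\<infinity>k. f k x)"
proof -
  have cont: "continuous_on {a..b} (\<lambda>x. \<Sum>k\<in>{- int n..<int n}. f k x)" for n
    by (intro continuous_on_sum assms(1))
  obtain I J where I: "\<And>n. ((\<lambda>x. \<Sum>k\<in>{- int n..<int n}. f k x) has_integral I n) {a..b}"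
    and J: "((\<lambda>x. \<Sum>\<^sub>\<infinity>k. f k x) has_integral J) {a..b}" and "I \<longlonglongrightarrow> J"
    by (rule uniform_limit_integral[OF uniform_limit_int_series[OF assms(2,3)] cont]) auto
  moreover have "I = (\<lambda>n. \<Sum>k\<in>{- int n..<int n}. integral {a..b} (f k))"
  proof
    fix n
    show "I n = (\<Sum>k\<in>{- int n..<int n}. integral {a..b} (f k))"
      using integral_unique[OF I[of n]]
      by (simp add: integral_sum integrable_continuous_real assms(1))
  qed
  ultimately show ?thesis
    using integral_unique[OF J] by simp
qed

lemma integral_symmetric_interval_eq_sum:
  fixes G :: "real \<Rightarrow> 'a::banach"
  assumes int: "\<And>a b. G integrable_on {a..b}"
  shows "integral {- real n..real n} G = (\<Sum>k\<in>{- int n..<int n}. integral {of_int k..of_int k + 1} G)"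
proof (induction n)
  case (Suc n)
  have c1: "integral {- real n..real n} G + integral {real n..real n + 1} G = integral {- real n..real n + 1} G"
    by (intro Henstock_Kurzweil_Integration.integral_combine int) auto
  have c2: "integral {- real n - 1..- real n} G + integral {- real n..real n + 1} G
      = integral {- real n - 1..real n + 1} G"
    by (intro Henstock_Kurzweil_Integration.integral_combine int) auto
  have set: "{- int (Suc n)..<int (Suc n)} = insert (- int n - 1) (insert (int n) {- int n..<int n})"
    by auto
  have "{- real (Suc n)..real (Suc n)} = {- real n - 1..real n + 1}"
    by auto
  then have "integral {- real (Suc n)..real (Suc n)} G = integral {- real n - 1..real n + 1} G"
    by (rule arg_cong[where f = "\<lambda>S. integral S G"])
  also have "\<dots> = integral {- real n - 1..- real n} G + (integral {- real n..real n} G + integral {real n..real n + 1} G)"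
    by (simp only: c1 c2)
  also have "\<dots> = (\<Sum>k\<in>{- int (Suc n)..<int (Suc n)}. integral {of_int k..of_int k + 1} G)"
    unfolding set using Suc by (simp add: add_ac)
  finally show ?case .
qed simp

lemma tendsto_integral_symmetric_interval:
  fixes G :: "real \<Rightarrow> 'a::banach"
  assumes "(G has_integral I) UNIV"
  shows "(\<lambda>n. integral {- real n..real n} G) \<longlonglongrightarrow> I"
proof (rule LIMSEQ_I)
  fix e :: real
  assume "e > 0"
  then have "\<exists>B>0. \<forall>a b. ball 0 B \<subseteq> cbox a b \<longrightarrow> norm (integral (cbox a b) G - I) < e"
    using assms unfolding has_integral_alt'[of G] by simp
  then obtain B where B: "\<And>a b. ball 0 B \<subseteq> cbox a b \<Longrightarrow> norm (integral (cbox a b) G - I) < e"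
    by blast
  obtain N :: nat where "B \<le> real N"
    using real_arch_simple by blast
  have "norm (integral {- real n..real n} G - I) < e" if "n \<ge> N" for n
  proof (rule B[of "- real n" "real n", simplified])
    show "ball 0 B \<subseteq> {- real n..real n}"
    proof
      fix x :: real
      assume "x \<in> ball 0 B"
      then have "\<bar>x\<bar> < B"
        by (simp add: dist_real_def)
      moreover have "B \<le> real n"
        using \<open>B \<le> real N\<close> that by (meson of_nat_le_iff order_trans)
      ultimately show "x \<in> {- real n..real n}"
        by auto
    qed
  qed
  then show "\<exists>N. \<forall>n\<ge>N. norm (integral {- real n..real n} G - I) < e"
    by blast
qed

lemma tendsto_integral_symmetric_interval_periodization:
  fixes G :: "real \<Rightarrow> 'a::banach"
  assumes G_cont: "continuous_on UNIV G"
    and bound: "\<And>k x. x \<in> {0..1} \<Longrightarrow> norm (G (of_int k + x)) \<le> M k" and M: "M summable_on UNIV"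
  shows "(\<lambda>n. integral {- real n..real n} G) \<longlonglongrightarrow> integral {0..1} (\<lambda>x. \<Sum>\<^sub>\<infinity>k. G (of_int k + x))"
proof -
  have "integral {0..1} (\<lambda>x. G (of_int k + x)) = integral {of_int k..of_int k + 1} G" for k
    using integral_shift_Icc_real[of 0 1 G "of_int k"] by (simp add: o_def add.commute)
  moreover have "(\<lambda>n. \<Sum>k\<in>{- int n..<int n}. integral {0..1} (\<lambda>x. G (of_int k + x)))
      \<longlonglongrightarrow> integral {0..1} (\<lambda>x. \<Sum>\<^sub>\<infinity>k. G (of_int k + x))"
    by (rule tendsto_sum_integral_int_series[OF _ bound M])
       (rule continuous_on_compose2[OF G_cont], auto intro!: continuous_intros)
  ultimately show ?thesis
    by (simp add: integral_symmetric_interval_eq_sum integrable_continuous_real continuous_on_subset[OF G_cont])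
qed

lemma has_sum_mult_Times:
  fixes f :: "'a \<Rightarrow> complex" and g :: "'b \<Rightarrow> complex"
  assumes f: "(f has_sum a) A" and g: "(g has_sum b) B"
  shows "((\<lambda>(x, y). f x * g y) has_sum a * b) (A \<times> B)"
proof (rule has_sum_SigmaI)
  show "((\<lambda>y. case (x, y) of (x, y) \<Rightarrow> f x * g y) has_sum f x * b) B" for x
    using has_sum_cmult_right[OF g, of "f x"] by simp
  show "((\<lambda>x. f x * b) has_sum a * b) A"
    by (rule has_sum_cmult_left[OF f])
  have norm_f: "(\<lambda>x. norm (f x)) summable_on A" and norm_g: "(\<lambda>y. norm (g y)) summable_on B"
    using f g summable_on_iff_abs_summable_on_complex by (auto simp: summable_on_def)
  have "(\<lambda>z. norm (case z of (x, y) \<Rightarrow> f x * g y)) summable_on Sigma A (\<lambda>_. B)"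
  proof (rule Infinite_Sum.abs_summable_on_Sigma_iff[where f = "\<lambda>(x, y). f x * g y", THEN iffD2], intro conjI ballI)
    show "(\<lambda>y. norm (case (x, y) of (x, y) \<Rightarrow> f x * g y)) summable_on B" for x
      using summable_on_cmult_right[OF norm_g, of "norm (f x)"] by (simp add: norm_mult)
    have "infsum (\<lambda>y. norm (f x * g y)) B = norm (f x) * infsum (\<lambda>y. norm (g y)) B" for x
      unfolding norm_mult by (rule infsum_cmult_right) (use norm_g in auto)
    then show "(\<lambda>x. norm (\<Sum>\<^sub>\<infinity>y\<in>B. norm (case (x, y) of (x, y) \<Rightarrow> f x * g y))) summable_on A"
      using summable_on_cmult_left[OF norm_f, of "infsum (\<lambda>y. norm (g y)) B"]
      by (simp add: infsum_nonneg)
  qed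
  then show "(\<lambda>(x, y). f x * g y) summable_on Sigma A (\<lambda>_. B)"
    by (rule abs_summable_summable)
qed

lemma sum_eq_if_has_sum_Sigma:
  fixes f :: "'a \<times> 'b \<Rightarrow> 'c::{topological_comm_monoid_add, t3_space}"
  assumes "(f has_sum s) (Sigma A B)" and "finite A"
    and "\<And>x. x \<in> A \<Longrightarrow> ((\<lambda>y. f (x, y)) has_sum g x) (B x)"
  shows "sum g A = s"
  using has_sum_SigmaD[OF assms(1,3)] has_sum_finite[OF assms(2)] has_sum_unique by blast

section \<open>Poisson summation for the Gaussian\<close>

lemma gaussian_fourier_transform:
  fixes T k :: real
  assumes T: "T > 0"
  defines "g \<equiv> \<lambda>y::real. complex_of_real (exp (- pi * T * y\<^sup>2)) * exp (2 * pi * \<i> * k * y)"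
  shows "integrable lborel g"
    and "(\<integral>y. g y \<partial>lborel) = complex_of_real (exp (- pi * k\<^sup>2 / T) / sqrt T)"
proof -
  define c where "c = sqrt (2 * pi * T)"
  define t where "t = 2 * pi * k / c"
  define \<phi> where "\<phi> x = std_normal_density x *\<^sub>R iexp (t * x)" for x
  have c: "c > 0"
    using T unfolding c_def by simp
  have g_eq: "g = (\<lambda>y. complex_of_real (sqrt (2 * pi)) * \<phi> (0 + c * y))"
  proof
    fix y
    have "std_normal_density (c * y) = exp (- pi * T * y\<^sup>2) / sqrt (2 * pi)"
      unfolding std_normal_density_def c_def using T by (simp add: power_mult_distrib)
    moreover have "iexp (t * (c * y)) = exp (2 * pi * \<i> * k * y)"
      unfolding t_def using c by (simp add: field_simps)
    ultimately show "g y = complex_of_real (sqrt (2 * pi)) * \<phi> (0 + c * y)"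
      unfolding \<phi>_def g_def by (simp add: scaleR_conv_of_real)
  qed
  have int_\<phi>: "integrable lborel \<phi>"
    unfolding \<phi>_def
    by (rule Bochner_Integration.integrable_bound[where f = std_normal_density])
       (auto simp: norm_mult integrable_std_normal_moment[of 0, simplified]
             intro!: borel_measurable_continuous_onI continuous_intros)
  then show "integrable lborel g"
    unfolding g_eq using lborel_integrable_real_affine[OF int_\<phi>, of c 0] c by simp
  have "integral\<^sup>L lborel \<phi> = char std_normal_distribution t"
    unfolding char_def \<phi>_def
    by (subst integral_density) (auto intro!: borel_measurable_continuous_onI continuous_intros)
  also have "\<dots> = complex_of_real (exp (- (t\<^sup>2) / 2))"
    by (simp add: char_std_normal_distribution)
  finally have "c *\<^sub>R (\<integral>y. \<phi> (0 + c * y) \<partial>lborel) = complex_of_real (exp (- (t\<^sup>2) / 2))"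
    using lborel_integral_real_affine[of c \<phi> 0] c by simp
  then have \<phi>_integral: "(\<integral>y. \<phi> (0 + c * y) \<partial>lborel) = complex_of_real (exp (- (t\<^sup>2) / 2)) / complex_of_real c"
    using c by (simp add: scaleR_conv_of_real field_simps)
  have "(\<integral>y. g y \<partial>lborel) = complex_of_real (sqrt (2 * pi)) * (\<integral>y. \<phi> (0 + c * y) \<partial>lborel)"
    unfolding g_eq by simp
  also have "\<dots> = complex_of_real (exp (- (t\<^sup>2) / 2) * (sqrt (2 * pi) / c))"
    unfolding \<phi>_integral by (simp add: of_real_divide)
  also have "sqrt (2 * pi) / c = 1 / sqrt T"
    unfolding c_def using T by (simp add: real_sqrt_mult)
  also have "- (t\<^sup>2) / 2 = - pi * k\<^sup>2 / T"
    unfolding t_def c_def using T by (simp add: power_divide power_mult_distrib field_simps power2_eq_square)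
  finally show "(\<integral>y. g y \<partial>lborel) = complex_of_real (exp (- pi * k\<^sup>2 / T) / sqrt T)"
    by simp
qed

definition gaussian :: "real \<Rightarrow> real \<Rightarrow> real" where
  "gaussian T y = exp (- pi * T * y\<^sup>2)"

lemma gaussian_nonneg: "gaussian T y \<ge> 0"
  by (simp add: gaussian_def)

lemma gaussian_minus [simp]: "gaussian T (- y) = gaussian T y"
  by (simp add: gaussian_def)

lemma continuous_on_gaussian [continuous_intros]:
  "continuous_on S f \<Longrightarrow> continuous_on S (\<lambda>x. gaussian T (f x))"
  unfolding gaussian_def by (intro continuous_intros)

lemma gaussian_le_geometric:
  assumes "T > 0" and "real n \<le> y\<^sup>2"
  shows "gaussian T y \<le> exp (- pi * T) ^ n"
proof -
  have "- pi * T * y\<^sup>2 \<le> real n * (- pi * T)"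
    using assms by (simp add: mult_left_mono)
  then show ?thesis
    unfolding gaussian_def exp_of_nat_mult[symmetric] by simp
qed

lemma gaussian_shift_le:
  assumes T: "T > 0" and R: "\<bar>x\<bar> \<le> R"
  shows "gaussian T (y + x) \<le> exp (pi * T * R\<^sup>2) * gaussian (T / 2) y"
proof -
  have "x\<^sup>2 \<le> R\<^sup>2"
    using R by (metis abs_ge_zero order_trans power2_abs power_mono)
  moreover have "0 \<le> (y + 2 * x)\<^sup>2"
    by simp
  ultimately have "y\<^sup>2 / 2 - R\<^sup>2 \<le> (y + x)\<^sup>2"
    by (simp add: power2_eq_square algebra_simps)
  then have "pi * T * (y\<^sup>2 / 2 - R\<^sup>2) \<le> pi * T * (y + x)\<^sup>2"
    using T by (intro mult_left_mono) auto
  then show ?thesis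
    unfolding gaussian_def exp_add[symmetric] by (simp add: algebra_simps)
qed

lemma summable_on_gaussian_int:
  assumes T: "T > 0"
  shows "(\<lambda>k::int. gaussian T (of_int k)) summable_on UNIV"
proof (rule summable_on_int_if_summable_halves)
  have geometric: "summable (\<lambda>n. exp (- pi * T) ^ n)"
    using T by (intro summable_geometric) simp
  show "summable (\<lambda>n. gaussian T (of_int (int n)))"
  proof (rule summable_comparison_test'[OF geometric])
    fix n :: nat
    have "real n \<le> (real n)\<^sup>2"
      by (cases n) (auto simp: power2_eq_square)
    then show "norm (gaussian T (of_int (int n))) \<le> exp (- pi * T) ^ n"
      using gaussian_le_geometric[OF T] gaussian_nonneg by simp
  qed
  show "summable (\<lambda>n. gaussian T (of_int (- int n - 1)))"
  proof (rule summable_comparison_test'[OF geometric])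
    fix n :: nat
    have "real n \<le> (- real n - 1)\<^sup>2"
      by (simp add: power2_eq_square algebra_simps)
    then show "norm (gaussian T (of_int (- int n - 1))) \<le> exp (- pi * T) ^ n"
      using gaussian_le_geometric[OF T] gaussian_nonneg by simp
  qed
qed (rule gaussian_nonneg)

lemma summable_on_gaussian_int_shift:
  assumes T: "T > 0"
  shows "(\<lambda>k::int. gaussian T (of_int k + x)) summable_on UNIV"
proof (rule summable_on_comparison_test)
  show "(\<lambda>k::int. exp (pi * T * x\<^sup>2) * gaussian (T / 2) (of_int k)) summable_on UNIV"
    using T by (intro summable_on_cmult_right summable_on_gaussian_int) auto
qed (use gaussian_shift_le[OF T, of x "\<bar>x\<bar>"] gaussian_nonneg in auto)

definition periodic_gaussian :: "real \<Rightarrow> real \<Rightarrow> real" where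
  "periodic_gaussian T x = (\<Sum>\<^sub>\<infinity>k::int. gaussian T (of_int k + x))"

lemma has_sum_periodic_gaussian:
  "T > 0 \<Longrightarrow> ((\<lambda>k::int. gaussian T (of_int k + x)) has_sum periodic_gaussian T x) UNIV"
  unfolding periodic_gaussian_def by (intro has_sum_infsum summable_on_gaussian_int_shift)

lemma periodic_gaussian_periodic: "periodic_gaussian T (x + 1) = periodic_gaussian T x"
  unfolding periodic_gaussian_def
  by (rule infsum_reindex_bij_witness[where j = "\<lambda>k. k + 1" and i = "\<lambda>k. k - 1"]) (auto simp: add_ac)

lemma continuous_on_periodic_gaussian:
  assumes T: "T > 0"
  shows "continuous_on UNIV (periodic_gaussian T)"
proof (intro continuous_at_imp_continuous_on ballI)
  fix x :: real
  define R where "R = \<bar>x\<bar> + 1"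
  have "continuous_on (ball 0 R) (periodic_gaussian T)"
    unfolding periodic_gaussian_def[abs_def]
  proof (rule continuous_on_int_series)
    show "(\<lambda>k::int. exp (pi * T * R\<^sup>2) * gaussian (T / 2) (of_int k)) summable_on UNIV"
      using T by (intro summable_on_cmult_right summable_on_gaussian_int) auto
    show "norm (gaussian T (of_int k + y)) \<le> exp (pi * T * R\<^sup>2) * gaussian (T / 2) (of_int k)"
      if "y \<in> ball 0 R" for k y
      using that gaussian_shift_le[OF T, of y R] by (simp add: gaussian_nonneg)
  qed (intro continuous_intros)
  moreover have "x \<in> ball 0 R"
    unfolding R_def by simp
  ultimately show "isCont (periodic_gaussian T) x"
    using continuous_on_eq_continuous_at open_ball by blast
qed

lemma fourier_coefficient_periodic_gaussian:
  assumes T: "T > 0"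
  shows "integral {0..1} (\<lambda>x. complex_of_real (periodic_gaussian T x) * fourier_char m x)
    = complex_of_real (exp (- pi * (of_int m)\<^sup>2 / T) / sqrt T)"
proof -
  define G where "G y = complex_of_real (gaussian T y) * fourier_char m y" for y
  have G_cont: "continuous_on S G" for S
    unfolding G_def by (intro continuous_intros)
  have "(G has_integral complex_of_real (exp (- pi * (of_int m)\<^sup>2 / T) / sqrt T)) UNIV"
    using has_integral_integral_lborel[OF gaussian_fourier_transform(1)[OF T, of "of_int m"]]
      gaussian_fourier_transform(2)[OF T, of "of_int m"]
    by (simp add: G_def[abs_def] gaussian_def fourier_char_def)
  then have "(\<lambda>n. integral {- real n..real n} G) \<longlonglongrightarrow> complex_of_real (exp (- pi * (of_int m)\<^sup>2 / T) / sqrt T)"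
    by (rule tendsto_integral_symmetric_interval)
  moreover have "(\<lambda>n. integral {- real n..real n} G)
      \<longlonglongrightarrow> integral {0..1} (\<lambda>x. \<Sum>\<^sub>\<infinity>k. G (of_int k + x))"
  proof (rule tendsto_integral_symmetric_interval_periodization[OF G_cont])
    show "(\<lambda>k::int. exp (pi * T * 1\<^sup>2) * gaussian (T / 2) (of_int k)) summable_on UNIV"
      using T by (intro summable_on_cmult_right summable_on_gaussian_int) auto
    show "norm (G (of_int k + x)) \<le> exp (pi * T * 1\<^sup>2) * gaussian (T / 2) (of_int k)"
      if "x \<in> {0..1}" for k x
      using that gaussian_shift_le[OF T, of x 1] by (simp add: G_def gaussian_nonneg norm_mult)
  qed
  moreover have "(\<Sum>\<^sub>\<infinity>k. G (of_int k + x)) = complex_of_real (periodic_gaussian T x) * fourier_char m x" for x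
  proof -
    have "G (of_int k + x) = complex_of_real (gaussian T (of_int k + x)) * fourier_char m x" for k
      using fourier_char_shift_int[of m x k] by (simp add: G_def add.commute)
    then show ?thesis
      using has_sum_cmult_right[OF has_sum_of_real[OF has_sum_periodic_gaussian[OF T]], of "fourier_char m x" x]
      by (simp add: infsumI mult.commute)
  qed
  ultimately show ?thesis
    using LIMSEQ_unique by auto
qed

lemma cos_eq_fourier_char:
  "complex_of_real (cos (2 * pi * of_int w * x)) = (fourier_char w x + fourier_char (- w) x) / 2"
  unfolding fourier_char_def cos_of_real[symmetric] cos_exp_eq by (simp add: mult_ac)

definition gaussian_cos_series :: "real \<Rightarrow> real \<Rightarrow> real" where
  "gaussian_cos_series T x = (\<Sum>\<^sub>\<infinity>w::int. gaussian (1 / T) (of_int w) * cos (2 * pi * of_int w * x))"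

lemma norm_gaussian_cos_le: "norm (gaussian S y * cos z) \<le> gaussian S y"
  using abs_cos_le_one[of z] gaussian_nonneg[of S y] by (simp add: abs_mult mult_left_le)

lemma has_sum_gaussian_cos_series:
  assumes T: "T > 0"
  shows "((\<lambda>w::int. gaussian (1 / T) (of_int w) * cos (2 * pi * of_int w * x)) has_sum gaussian_cos_series T x) UNIV"
proof -
  have "(\<lambda>w::int. norm (gaussian (1 / T) (of_int w) * cos (2 * pi * of_int w * x))) summable_on UNIV"
  proof (rule summable_on_comparison_test[OF summable_on_gaussian_int])
    show "norm (gaussian (1 / T) (of_int w) * cos (2 * pi * of_int w * x)) \<le> gaussian (1 / T) (of_int w)" for w
      by (rule norm_gaussian_cos_le)
  qed (use T in auto)
  then show ?thesis
    unfolding gaussian_cos_series_def by (rule has_sum_infsum[OF abs_summable_summable])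
qed

lemma gaussian_cos_series_periodic: "gaussian_cos_series T (x + 1) = gaussian_cos_series T x"
proof -
  have "cos (2 * pi * of_int w * (x + 1)) = cos (2 * pi * of_int w * x)" for w :: int
  proof -
    have "cos (2 * pi * of_int w * (x + 1)) = cos (2 * pi * of_int w * x + (2 * pi) * of_int w)"
      by (simp add: algebra_simps)
    also have "\<dots> = cos (2 * pi * of_int w * x)"
      by (simp only: cos_add cos_int_2pin sin_int_2pin) simp?
    finally show ?thesis .
  qed
  then show ?thesis
    unfolding gaussian_cos_series_def by simp
qed

lemma continuous_on_gaussian_cos_series:
  assumes T: "T > 0"
  shows "continuous_on UNIV (gaussian_cos_series T)"
  unfolding gaussian_cos_series_def[abs_def]
proof (rule continuous_on_int_series[OF _ _ summable_on_gaussian_int[of "1 / T"]])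
  show "continuous_on UNIV (\<lambda>x. gaussian (1 / T) (of_int w) * cos (2 * pi * of_int w * x))" for w
    by (intro continuous_intros)
  show "norm (gaussian (1 / T) (of_int w) * cos (2 * pi * of_int w * x)) \<le> gaussian (1 / T) (of_int w)" for w x
    by (rule norm_gaussian_cos_le)
qed (use T in auto)

lemma integral_cos_mult_fourier_char:
  "integral {0..1} (\<lambda>x. complex_of_real (cos (2 * pi * of_int w * x)) * fourier_char m x)
    = ((if w = - m then 1 else 0) + (if w = m then 1 else 0)) / 2"
proof -
  have "complex_of_real (cos (2 * pi * of_int w * x)) * fourier_char m x
      = (fourier_char w x * fourier_char m x + fourier_char (- w) x * fourier_char m x) / 2" for x
    unfolding cos_eq_fourier_char by (simp add: field_simps)
  then have eq: "complex_of_real (cos (2 * pi * of_int w * x)) * fourier_char m x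
      = (fourier_char (w + m) x + fourier_char (- w + m) x) / 2" for x
    by (simp only: fourier_char_mult)
  have "integral {0..1} (\<lambda>x. complex_of_real (cos (2 * pi * of_int w * x)) * fourier_char m x)
      = (integral {0..1} (fourier_char (w + m)) + integral {0..1} (fourier_char (- w + m))) / 2"
    unfolding eq by (simp add: integral_add integrable_continuous_real continuous_on_fourier_char)
  then show ?thesis
    by (auto simp: integral_fourier_char)
qed

lemma fourier_coefficient_gaussian_cos_series:
  assumes T: "T > 0"
  shows "integral {0..1} (\<lambda>x. complex_of_real (gaussian_cos_series T x) * fourier_char m x)
    = complex_of_real (gaussian (1 / T) (of_int m))"
proof -
  define g where "g w = complex_of_real (gaussian (1 / T) (of_int w))" for w :: int
  define f where "f w x = complex_of_real (gaussian (1 / T) (of_int w) * cos (2 * pi * of_int w * x))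
    * fourier_char m x" for w :: int and x :: real
  have integral_f: "integral {0..1} (f w) = (if w = - m then g w / 2 else 0) + (if w = m then g w / 2 else 0)" for w
  proof -
    have "f w = (\<lambda>x. g w * (complex_of_real (cos (2 * pi * of_int w * x)) * fourier_char m x))"
      by (simp add: fun_eq_iff f_def g_def)
    then show ?thesis
      by (simp add: integral_cos_mult_fourier_char)
  qed
  have "eventually (\<lambda>n. (\<Sum>w\<in>{- int n..<int n}. integral {0..1} (f w)) = g m) sequentially"
    using eventually_ge_at_top[of "nat \<bar>m\<bar> + 1"]
  proof eventually_elim
    case (elim n)
    then have "- m \<in> {- int n..<int n}" "m \<in> {- int n..<int n}"
      by auto
    moreover have "g (- m) = g m"
      by (simp add: g_def)
    ultimately show ?case
      by (simp add: integral_f sum.distrib)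
  qed
  then have "(\<lambda>n. \<Sum>w\<in>{- int n..<int n}. integral {0..1} (f w)) \<longlonglongrightarrow> g m"
    by (rule tendsto_eventually)
  moreover have "(\<lambda>n. \<Sum>w\<in>{- int n..<int n}. integral {0..1} (f w)) \<longlonglongrightarrow> integral {0..1} (\<lambda>x. \<Sum>\<^sub>\<infinity>w. f w x)"
  proof (rule tendsto_sum_integral_int_series[OF _ _ summable_on_gaussian_int[of "1 / T"]])
    show "continuous_on {0..1} (f w)" for w
      unfolding f_def by (intro continuous_intros)
    show "norm (f w x) \<le> gaussian (1 / T) (of_int w)" for w x
      using norm_gaussian_cos_le[of "1 / T" "of_int w" "2 * pi * of_int w * x"] by (simp add: f_def norm_mult)
  qed (use T in simp)
  moreover have "(\<lambda>x. \<Sum>\<^sub>\<infinity>w. f w x) = (\<lambda>x. complex_of_real (gaussian_cos_series T x) * fourier_char m x)"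
    unfolding f_def
    by (intro ext infsumI has_sum_cmult_left has_sum_of_real has_sum_gaussian_cos_series T)
  ultimately show ?thesis
    unfolding g_def by (metis LIMSEQ_unique)
qed

lemma poisson_summation_gaussian:
  assumes T: "T > 0"
  shows "((\<lambda>w::int. gaussian (1 / T) (of_int w) * cos (2 * pi * of_int w * x)) has_sum sqrt T * periodic_gaussian T x) UNIV"
proof -
  define d where "d y = periodic_gaussian T y - gaussian_cos_series T y / sqrt T" for y
  have "continuous_on UNIV d"
    unfolding d_def[abs_def] using T
    by (intro continuous_intros continuous_on_periodic_gaussian continuous_on_gaussian_cos_series) auto
  then have "d x = 0"
  proof (rule fourier_coefficients_eq_0_imp_eq_0)
    show "d (y + 1) = d y" for y
      by (simp add: d_def periodic_gaussian_periodic gaussian_cos_series_periodic)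
    fix m :: int
    have int: "(\<lambda>x. complex_of_real (h x) * fourier_char m x) integrable_on {0..1}"
      if "continuous_on UNIV h" for h
      by (intro integrable_continuous_real continuous_intros continuous_on_subset[OF that]) auto
    have "integral {0..1} (\<lambda>x. complex_of_real (d x) * fourier_char m x)
        = integral {0..1} (\<lambda>x. complex_of_real (periodic_gaussian T x) * fourier_char m x)
          - integral {0..1} (\<lambda>x. complex_of_real (gaussian_cos_series T x) * fourier_char m x) / sqrt T"
      unfolding d_def using T int[OF continuous_on_periodic_gaussian[OF T]] int[OF continuous_on_gaussian_cos_series[OF T]]
      by (simp add: left_diff_distrib integral_diff integral_divide)
    also have "\<dots> = 0"
      using T by (simp add: fourier_coefficient_periodic_gaussian fourier_coefficient_gaussian_cos_series gaussian_def)
    finally show "integral {0..1} (\<lambda>x. complex_of_real (d x) * fourier_char m x) = 0" .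
  qed
  then have "gaussian_cos_series T x = sqrt T * periodic_gaussian T x"
    using T by (simp add: d_def field_simps)
  then show ?thesis
    using has_sum_gaussian_cos_series[OF T, of x] by simp
qed

section \<open>Theta functions at \<open>\<tau> = i q / 2\<close>\<close>

definition theta_term :: "nat \<Rightarrow> real \<Rightarrow> real \<Rightarrow> real \<Rightarrow> int \<Rightarrow> complex" where
  "theta_term q a b s k = exp (pi * \<i> * (of_int k + of_real a)\<^sup>2 * (\<i> * of_nat q / 2)
                              + 2 * pi * \<i> * (of_int k + of_real a) * (of_real s + of_real b))"

lemma norm_theta_term: "norm (theta_term q a b s k) = gaussian (real q / 2) (of_int k + a)"
proof -
  have "pi * \<i> * (of_int k + of_real a)\<^sup>2 * (\<i> * of_nat q / 2) + 2 * pi * \<i> * (of_int k + of_real a) * (of_real s + of_real b)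
      = complex_of_real (- pi * (real q / 2) * (of_int k + a)\<^sup>2) + \<i> * complex_of_real (2 * pi * (of_int k + a) * (s + b))"
    by (simp add: algebra_simps power2_eq_square)
  then show ?thesis
    unfolding theta_term_def gaussian_def by (simp add: norm_exp_eq_Re)
qed

lemma has_sum_theta_term:
  assumes "q > 0"
  shows "(theta_term q a b s has_sum theta_char a b (of_real s) (\<i> * of_nat q / 2)) UNIV"
proof -
  have "(\<lambda>k. norm (theta_term q a b s k)) summable_on UNIV"
    unfolding norm_theta_term using assms by (intro summable_on_gaussian_int_shift) simp
  then have "theta_term q a b s summable_on UNIV"
    by (rule abs_summable_summable)
  then show ?thesis
    unfolding theta_char_def theta_term_def by (rule has_sum_infsum)
qed

lemma theta_term_product_antidiagonal:
  "theta_term q 0 0 t (u + j) * theta_term q 0 0 t (- j)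
    = exp (2 * pi * \<i> * of_real t * of_int u - pi * of_nat q * (of_int u)\<^sup>2 / 4)
      * complex_of_real (gaussian (real q) (of_int j + of_int u / 2))"
  unfolding theta_term_def gaussian_def exp_of_real[symmetric] mult_exp_exp
  by (rule arg_cong[where f = exp]) (simp add: algebra_simps power2_eq_square)

lemma has_sum_theta_square:
  assumes q: "q > 0"
  shows "((\<lambda>u::int. exp (2 * pi * \<i> * of_real t * of_int u - pi * of_nat q * (of_int u)\<^sup>2 / 4)
      * complex_of_real (periodic_gaussian (real q) (of_int u / 2)))
    has_sum theta (of_real t) (\<i> * of_nat q / 2) ^ 2) UNIV"
proof -
  have theta: "(theta_term q 0 0 t has_sum theta (of_real t) (\<i> * of_nat q / 2)) UNIV"
    unfolding theta_def using has_sum_theta_term[OF q] by simp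
  have "((\<lambda>(k, l). theta_term q 0 0 t k * theta_term q 0 0 t l) has_sum theta (of_real t) (\<i> * of_nat q / 2) ^ 2)
      (UNIV \<times> UNIV)"
    using has_sum_mult_Times[OF theta theta] by (simp add: power2_eq_square)
  also have "?this \<longleftrightarrow> ((\<lambda>(u, j). theta_term q 0 0 t (u + j) * theta_term q 0 0 t (- j))
      has_sum theta (of_real t) (\<i> * of_nat q / 2) ^ 2) (UNIV \<times> UNIV)"
    by (rule has_sum_reindex_bij_witness[where j = "\<lambda>(k, l). (k + l, - l)" and i = "\<lambda>(u, j). (u + j, - j)"])
       auto
  finally show ?thesis
    unfolding Sigma_def[symmetric]
  proof (rule has_sum_SigmaD)
    show "((\<lambda>j. case (u, j) of (u, j) \<Rightarrow> theta_term q 0 0 t (u + j) * theta_term q 0 0 t (- j))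
        has_sum exp (2 * pi * \<i> * of_real t * of_int u - pi * of_nat q * (of_int u)\<^sup>2 / 4)
          * complex_of_real (periodic_gaussian (real q) (of_int u / 2))) UNIV" for u
      unfolding prod.case theta_term_product_antidiagonal
      using q by (intro has_sum_cmult_right has_sum_of_real has_sum_periodic_gaussian) simp
  qed
qed

definition dual_theta_term :: "nat \<Rightarrow> real \<Rightarrow> int \<Rightarrow> int \<Rightarrow> complex" where
  "dual_theta_term q t u w = exp (2 * pi * \<i> * of_real t * of_int u - pi * of_nat q * (of_int u)\<^sup>2 / 4
                                 - pi * (of_int w)\<^sup>2 / of_nat q + pi * \<i> * of_int u * of_int w)"

lemma cos_pi_times_int_eq_exp: "complex_of_real (cos (2 * pi * of_int w * (of_int u / 2))) = exp (pi * \<i> * of_int u * of_int w)"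
proof -
  have "2 * pi * of_int w * (of_int u / 2) = pi * of_int (u * w)"
    by (simp add: algebra_simps)
  moreover have "complex_of_real (cos (pi * of_int (u * w))) = cis (pi * of_int (u * w))"
    using sin_npi_int[of "u * w"] by (simp add: complex_eq_iff)
  ultimately show ?thesis
    by (simp add: cis_conv_exp mult_ac)
qed

lemma dual_theta_term_eq:
  "dual_theta_term q t u w = exp (2 * pi * \<i> * of_real t * of_int u - pi * of_nat q * (of_int u)\<^sup>2 / 4)
    * complex_of_real (gaussian (1 / real q) (of_int w) * cos (2 * pi * of_int w * (of_int u / 2)))"
proof -
  have dual_factor: "complex_of_real (gaussian (1 / real q) (of_int w) * cos (2 * pi * of_int w * (of_int u / 2)))
      = exp (complex_of_real (- pi * (1 / real q) * (of_int w)\<^sup>2) + pi * \<i> * of_int u * of_int w)"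
    unfolding gaussian_def of_real_mult cos_pi_times_int_eq_exp exp_of_real[symmetric] mult_exp_exp ..
  show ?thesis
    unfolding dual_theta_term_def dual_factor mult_exp_exp
    by (rule arg_cong[where f = exp]) (simp add: algebra_simps)
qed

lemma summable_on_dual_theta_term:
  assumes q: "q > 0"
  shows "(\<lambda>(u, w). dual_theta_term q t u w) summable_on UNIV \<times> UNIV"
proof -
  define M where "M u w = complex_of_real (gaussian (real q / 4) (of_int u)) * complex_of_real (gaussian (1 / real q) (of_int w))"
    for u w :: int
  have "(\<lambda>u::int. complex_of_real (gaussian (real q / 4) (of_int u))) summable_on UNIV"
    and "(\<lambda>w::int. complex_of_real (gaussian (1 / real q) (of_int w))) summable_on UNIV"
    using q by (auto intro!: summable_on_of_real summable_on_gaussian_int)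
  then obtain a b where "((\<lambda>u::int. complex_of_real (gaussian (real q / 4) (of_int u))) has_sum a) UNIV"
    and "((\<lambda>w::int. complex_of_real (gaussian (1 / real q) (of_int w))) has_sum b) UNIV"
    unfolding summable_on_def by blast
  from has_sum_mult_Times[OF this] have "(\<lambda>(u, w). M u w) summable_on UNIV \<times> UNIV"
    unfolding M_def summable_on_def by blast
  then have "(\<lambda>z. norm (case z of (u, w) \<Rightarrow> M u w)) summable_on UNIV \<times> UNIV"
    using summable_on_iff_abs_summable_on_complex by blast
  then have "(\<lambda>z. norm (case z of (u, w) \<Rightarrow> dual_theta_term q t u w)) summable_on UNIV \<times> UNIV"
  proof (rule Infinite_Sum.abs_summable_on_comparison_test, clarify)
    fix u w :: int
    have norm_E: "norm (exp (2 * pi * \<i> * of_real t * of_int u - pi * of_nat q * (of_int u)\<^sup>2 / 4 :: complex))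
        = gaussian (real q / 4) (of_int u)"
      by (simp add: norm_exp_eq_Re gaussian_def)
    show "norm (dual_theta_term q t u w) \<le> norm (M u w)"
      unfolding dual_theta_term_eq norm_mult norm_of_real M_def norm_E
      using norm_gaussian_cos_le[of "1 / real q" "of_int w"] by (simp add: gaussian_nonneg mult_left_mono)
  qed
  then show ?thesis
    by (rule abs_summable_summable)
qed

lemma has_sum_dual_theta_term:
  assumes q: "q > 0"
  shows "((\<lambda>(u, w). dual_theta_term q t u w)
    has_sum of_real (sqrt (real q)) * theta (of_real t) (\<i> * of_nat q / 2) ^ 2) (UNIV \<times> UNIV)"
proof -
  define E :: "int \<Rightarrow> complex"
    where "E u = exp (2 * pi * \<i> * of_real t * of_int u - pi * of_nat q * (of_int u)\<^sup>2 / 4)" for u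
  have "((\<lambda>w. dual_theta_term q t u w) has_sum E u * of_real (sqrt (real q) * periodic_gaussian (real q) (of_int u / 2)))
      UNIV" for u
    unfolding dual_theta_term_eq E_def[symmetric]
    using q by (intro has_sum_cmult_right has_sum_of_real poisson_summation_gaussian) simp
  moreover have "((\<lambda>u. E u * of_real (sqrt (real q) * periodic_gaussian (real q) (of_int u / 2)))
      has_sum of_real (sqrt (real q)) * theta (of_real t) (\<i> * of_nat q / 2) ^ 2) UNIV"
    using has_sum_cmult_right[OF has_sum_theta_square[OF q, of t], of "of_real (sqrt (real q))"]
    by (simp add: E_def mult_ac)
  ultimately show ?thesis
    using summable_on_dual_theta_term[OF q] by (intro has_sum_SigmaI) auto
qed

section \<open>Rearranging the sum over the characteristics\<close>

fun theta_product_term :: "nat \<Rightarrow> real \<Rightarrow> real \<Rightarrow> (nat \<times> nat) \<times> int \<times> int \<times> int \<times> int \<Rightarrow> complex" where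
  "theta_product_term q t1 t2 ((m, n), (k, l, k', l')) =
     exp (- 4 * pi * \<i> * of_nat m * of_nat n / of_nat q)
     * theta_term q (real n / real q) (real m / 2) t1 k * theta_term q (real n / real q) (real m / 2) (- t1) l
     * theta_term q (real m / real q) (real n / 2) t2 k' * theta_term q (real m / real q) (real n / 2) (- t2) l'"

(* The exponents in theta_product_term_eq_dual, with c for pi and P for p = q / 2; the last
   summand is 2 pi i times an integer. *)
lemma theta_exponent_identity:
  fixes K L K' L' M N P t1 t2 c :: complex
  assumes "P \<noteq> 0"
  shows "- 4 * c * \<i> * M * N / (2 * P)
     + (c * \<i> * (K + N / (2 * P))\<^sup>2 * (\<i> * (2 * P) / 2) + 2 * c * \<i> * (K + N / (2 * P)) * (t1 + M / 2))
     + (c * \<i> * (L + N / (2 * P))\<^sup>2 * (\<i> * (2 * P) / 2) + 2 * c * \<i> * (L + N / (2 * P)) * (- t1 + M / 2))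
     + (c * \<i> * (K' + M / (2 * P))\<^sup>2 * (\<i> * (2 * P) / 2) + 2 * c * \<i> * (K' + M / (2 * P)) * (t2 + N / 2))
     + (c * \<i> * (L' + M / (2 * P))\<^sup>2 * (\<i> * (2 * P) / 2) + 2 * c * \<i> * (L' + M / (2 * P)) * (- t2 + N / 2))
   = (2 * c * \<i> * t1 * (K - L) - c * (2 * P) * (K - L)\<^sup>2 / 4 - c * (P * (K' + L') + M)\<^sup>2 / (2 * P)
        + c * \<i> * (K - L) * (P * (K' + L') + M))
     + (2 * c * \<i> * t2 * (K' - L') - c * (2 * P) * (K' - L')\<^sup>2 / 4 - c * (P * (K + L) + N)\<^sup>2 / (2 * P)
        + c * \<i> * (K' - L') * (P * (K + L) + N))
     + 2 * (M * L + N * L' - P * (K * K' - L * L')) * c * \<i>"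
  using assms by (simp add: field_simps power2_eq_square)

lemma theta_product_term_eq_dual:
  assumes q: "q = 2 * p" and p: "p > 0"
  shows "theta_product_term q t1 t2 ((m, n), (k, l, k', l'))
    = dual_theta_term q t1 (k - l) (int p * (k' + l') + int m) * dual_theta_term q t2 (k' - l') (int p * (k + l) + int n)"
  unfolding theta_product_term.simps theta_term_def dual_theta_term_def mult_exp_exp exp_eq
  by (rule exI[of _ "int m * l + int n * l' - int p * (k * k' - l * l')"])
     (use theta_exponent_identity[of "of_nat p" "complex_of_real pi" "of_nat m" "of_nat n" "of_int k" t1 "of_int l"
        "of_int k'" t2 "of_int l'"] p in \<open>simp add: q algebra_simps\<close>)

lemma bij_betw_theta_indices:
  assumes q: "q = 2 * p" and p: "p > 0"
  shows "bij_betw (\<lambda>((m, n), (k, l, k', l')). ((k - l, int p * (k' + l') + int m), (k' - l', int p * (k + l) + int n)))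
    (({..<q} \<times> {..<q}) \<times> UNIV) (UNIV \<times> UNIV)"
proof (rule bij_betw_byWitness[where f' = "\<lambda>((u, w'), (u', w)).
    ((nat ((w' - int p * u') mod int q), nat ((w - int p * u) mod int q)),
     ((w - int p * u) div int q + u, (w - int p * u) div int q,
      (w' - int p * u') div int q + u', (w' - int p * u') div int q))"], safe)
  fix m n :: nat and k l k' l' :: int
  assume "m < q" "n < q"
  have divmod: "(int q * x + int r) div int q = x" "(int q * x + int r) mod int q = int r" if "r < q" for x r
    using that by (simp_all add: add.commute)
  have shift: "int p * (k + l) + int n - int p * (k - l) = int q * l + int n"
    "int p * (k' + l') + int m - int p * (k' - l') = int q * l' + int m"
    by (simp_all add: q algebra_simps)
  show "nat ((int p * (k' + l') + int m - int p * (k' - l')) mod int q) = m"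
    and "nat ((int p * (k + l) + int n - int p * (k - l)) mod int q) = n"
    and "(int p * (k + l) + int n - int p * (k - l)) div int q + (k - l) = k"
    and "(int p * (k + l) + int n - int p * (k - l)) div int q = l"
    and "(int p * (k' + l') + int m - int p * (k' - l')) div int q + (k' - l') = k'"
    and "(int p * (k' + l') + int m - int p * (k' - l')) div int q = l'"
    unfolding shift using divmod \<open>m < q\<close> \<open>n < q\<close> by simp_all
next
  fix u w' u' w :: int
  have "int p * (2 * ((w - int p * u) div int q) + u) + (w - int p * u) mod int q = w"
    and "int p * (2 * ((w' - int p * u') div int q) + u') + (w' - int p * u') mod int q = w'"
    using div_mult_mod_eq[of "w - int p * u" "int q"] div_mult_mod_eq[of "w' - int p * u'" "int q"]
    by (simp_all add: q algebra_simps)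
  then show "int p * ((w' - int p * u') div int q + u' + (w' - int p * u') div int q)
      + int (nat ((w' - int p * u') mod int q)) = w'"
    and "int p * ((w - int p * u) div int q + u + (w - int p * u) div int q)
      + int (nat ((w - int p * u) mod int q)) = w"
    using p q by (simp_all add: algebra_simps)
  show "nat ((w' - int p * u') mod int q) < q" and "nat ((w - int p * u) mod int q) < q"
    using p q by (simp_all add: nat_less_iff)
qed auto

lemma has_sum_theta_product_term:
  assumes q: "q = 2 * p" and p: "p > 0"
  shows "(theta_product_term q t1 t2 has_sum of_nat q * theta (of_real t1) (\<i> * of_nat q / 2) ^ 2
      * theta (of_real t2) (\<i> * of_nat q / 2) ^ 2) (({..<q} \<times> {..<q}) \<times> UNIV)"
proof -
  define g :: "(nat \<times> nat) \<times> int \<times> int \<times> int \<times> int \<Rightarrow> (int \<times> int) \<times> int \<times> int"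
    where "g = (\<lambda>((m, n), (k, l, k', l')). ((k - l, int p * (k' + l') + int m), (k' - l', int p * (k + l) + int n)))"
  define F where "F = (\<lambda>(x, y). (\<lambda>(u, w). dual_theta_term q t1 u w) x * (\<lambda>(u, w). dual_theta_term q t2 u w) y)"
  have "q > 0"
    using p q by simp
  have "(F has_sum (of_real (sqrt (real q)) * theta (of_real t1) (\<i> * of_nat q / 2) ^ 2)
      * (of_real (sqrt (real q)) * theta (of_real t2) (\<i> * of_nat q / 2) ^ 2)) ((UNIV \<times> UNIV) \<times> (UNIV \<times> UNIV))"
    unfolding F_def
    by (rule has_sum_mult_Times[OF has_sum_dual_theta_term has_sum_dual_theta_term]) (use \<open>q > 0\<close> in simp_all)
  moreover have "(of_real (sqrt (real q)) * theta (of_real t1) (\<i> * of_nat q / 2) ^ 2)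
      * (of_real (sqrt (real q)) * theta (of_real t2) (\<i> * of_nat q / 2) ^ 2)
    = (complex_of_real (sqrt (real q)) * of_real (sqrt (real q)))
      * theta (of_real t1) (\<i> * of_nat q / 2) ^ 2 * theta (of_real t2) (\<i> * of_nat q / 2) ^ 2"
    by (simp only: ac_simps)
  moreover have "complex_of_real (sqrt (real q)) * complex_of_real (sqrt (real q)) = of_nat q"
    by (simp flip: of_real_mult)
  ultimately have "((\<lambda>x. F (g x)) has_sum of_nat q * theta (of_real t1) (\<i> * of_nat q / 2) ^ 2
      * theta (of_real t2) (\<i> * of_nat q / 2) ^ 2) (({..<q} \<times> {..<q}) \<times> UNIV)"
    unfolding has_sum_reindex_bij_betw[OF bij_betw_theta_indices[OF q p, folded g_def]]
    by simp
  moreover have "(\<lambda>x. F (g x)) = theta_product_term q t1 t2"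
    by (simp add: fun_eq_iff F_def g_def theta_product_term_eq_dual[OF q p] del: theta_product_term.simps)
  ultimately show ?thesis
    by simp
qed

lemma has_sum_theta_product_term_fixed_characteristics:
  assumes "q > 0"
  shows "((\<lambda>y. theta_product_term q t1 t2 ((m, n), y)) has_sum exp (- 4 * pi * \<i> * of_nat m * of_nat n / of_nat q)
      * theta_char (real n / real q) (real m / 2) (of_real t1) (\<i> * of_nat q / 2)
      * theta_char (real n / real q) (real m / 2) (- of_real t1) (\<i> * of_nat q / 2)
      * theta_char (real m / real q) (real n / 2) (of_real t2) (\<i> * of_nat q / 2)
      * theta_char (real m / real q) (real n / 2) (- of_real t2) (\<i> * of_nat q / 2)) UNIV"
proof -
  note theta = has_sum_theta_term[OF assms]
  have "((\<lambda>y. theta_product_term q t1 t2 ((m, n), y)) has_sum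
      exp (- 4 * pi * \<i> * of_nat m * of_nat n / of_nat q)
      * (theta_char (real n / real q) (real m / 2) (of_real t1) (\<i> * of_nat q / 2)
      * (theta_char (real n / real q) (real m / 2) (of_real (- t1)) (\<i> * of_nat q / 2)
      * (theta_char (real m / real q) (real n / 2) (of_real t2) (\<i> * of_nat q / 2)
      * theta_char (real m / real q) (real n / 2) (of_real (- t2)) (\<i> * of_nat q / 2))))) UNIV"
    by (rule has_sum_cong[THEN iffD1, OF _ has_sum_cmult_right[OF
          has_sum_mult_Times[OF theta has_sum_mult_Times[OF theta has_sum_mult_Times[OF theta theta]]],
          unfolded UNIV_Times_UNIV]])
       (simp add: split_paired_all mult_ac)
  then show ?thesis
    by (simp only: of_real_minus mult.assoc)
qed

theorem mainTheorem12:
  fixes q :: nat and t1 t2 :: real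
  assumes "even q" and "q \<ge> 2"
  shows "(\<Sum>m<q. \<Sum>n<q.
            exp (- 4 * pi * \<i> * of_nat m * of_nat n / of_nat q)
            * theta_char (real n / real q) (real m / 2) (of_real t1) (\<i> * of_nat q / 2)
            * theta_char (real n / real q) (real m / 2) (- of_real t1) (\<i> * of_nat q / 2)
            * theta_char (real m / real q) (real n / 2) (of_real t2) (\<i> * of_nat q / 2)
            * theta_char (real m / real q) (real n / 2) (- of_real t2) (\<i> * of_nat q / 2))
         = of_nat q * theta (of_real t1) (\<i> * of_nat q / 2) ^ 2
                    * theta (of_real t2) (\<i> * of_nat q / 2) ^ 2"
proof -
  obtain p where q: "q = 2 * p"
    using \<open>even q\<close> by blast
  with \<open>q \<ge> 2\<close> have "p > 0" "q > 0"
    by simp_all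
  have "(\<Sum>(m, n)\<in>{..<q} \<times> {..<q}. exp (- 4 * pi * \<i> * of_nat m * of_nat n / of_nat q)
            * theta_char (real n / real q) (real m / 2) (of_real t1) (\<i> * of_nat q / 2)
            * theta_char (real n / real q) (real m / 2) (- of_real t1) (\<i> * of_nat q / 2)
            * theta_char (real m / real q) (real n / 2) (of_real t2) (\<i> * of_nat q / 2)
            * theta_char (real m / real q) (real n / 2) (- of_real t2) (\<i> * of_nat q / 2))
         = of_nat q * theta (of_real t1) (\<i> * of_nat q / 2) ^ 2 * theta (of_real t2) (\<i> * of_nat q / 2) ^ 2"
    using has_sum_theta_product_term[OF q \<open>p > 0\<close>] has_sum_theta_product_term_fixed_characteristics[OF \<open>q > 0\<close>]
    by (intro sum_eq_if_has_sum_Sigma) auto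
  then show ?thesis
    by (simp add: sum.cartesian_product)
qed

end
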